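(* Let $g>0$, let $\gamma:\mathbb{R}\to[0,\infty)$, $s\mapsto\gamma_s$, be smooth, and for $s\in\mathbb{R}$ let $$H_s=\frac12\begin{pmatrix} s& g\\ g& -s\end{pmatrix}=e_s(P_s^+-P_s^-),\qquad e_s=\tfrac12\sqrt{s^2+g^2},$$ where $P_s^\pm$ are the eigenprojections of $H_s$ for the eigenvalues $\pm e_s$. Let $\mathcal{L}_s\rho=-i[H_s,\rho]-\frac{\gamma_s}{2}[\sqrt{H_s},[\sqrt{H_s},\rho]]$ with $\sqrt{H_s}:=\operatorname{sgn}(H_s)\sqrt{|H_s|}$, and set $$E_s=\frac{1}{4e_s}\begin{pmatrix} g& -s-2e_s\\ -s+2e_s& -g\end{pmatrix}.$$ Then for every $\epsilon>0$ and $s'\in\mathbb{R}$ the equation $\epsilon\,\frac{d}{ds}\rho(s)=\mathcal{L}_s\rho(s)$, $s\geq s'$, admits solutions of the form $$\rho^\pm(s)=P_s^\pm+\epsilon\,a^\pm_{s,s'}+\epsilon^2 r^\pm(s,s'),$$ $$a^\pm_{s,s'}=\pm\frac{g\big((i-\gamma_s)E_s+\big((i-\gamma_s)E_s\big)^*\big)}{16(1+\gamma_s^2)e_s^3}\pm\frac{g^2(P_s^--P_s^+)}{64}\int_{s'}^s\frac{\gamma_\tau}{(1+\gamma_\tau^2)e_\tau^5}\,d\tau,$$ where $r^\pm(s,s')$ is bounded uniformly in $\epsilon$ for $s,s'$ in bounded sets. Moreover, if $\gamma_s$, $\dot\gamma_s$ and $\ddot\gamma_s$ are bounded continuous functions,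 then $r^\pm(s,s')$ is bounded uniformly in $\epsilon$ and in $s\geq s'$.
   Context: All operators act on $\mathbb{C}^2$; norms on $2\times 2$ matrices may be taken as the trace norm. Dots denote derivatives with respect to $s$. $(\cdot)^*$ denotes the adjoint. *)

theory Defs
  imports "HOL-Analysis.Analysis"
begin

text \<open>2x2 complex matrices are modelled as complex^2^2 (norm: Frobenius norm,
equivalent to the trace norm on this finite-dimensional space).\<close>

type_synonym cmat = "complex^2^2"

definition mat2 :: "complex \<Rightarrow> complex \<Rightarrow> complex \<Rightarrow> complex \<Rightarrow> cmat" where
  "mat2 a b c d = (\<chi> i j. if i = 1 then (if j = 1 then a else b) else (if j = 1 then c else d))"

definition cscale :: "complex \<Rightarrow> cmat \<Rightarrow> cmat" where
  "cscale c A = (\<chi> i j. c * A$i$j)"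

definition adjoint :: "cmat \<Rightarrow> cmat" where
  "adjoint A = (\<chi> i j. cnj (A$j$i))"

definition comm :: "cmat \<Rightarrow> cmat \<Rightarrow> cmat" where
  "comm A B = A ** B - B ** A"

definition smooth_fun :: "(real \<Rightarrow> real) \<Rightarrow> bool" where
  "smooth_fun f \<longleftrightarrow> (\<forall>n x. ((deriv ^^ n) f) differentiable (at x))"

definition Hs :: "real \<Rightarrow> real \<Rightarrow> cmat" where
  "Hs g s = cscale (1/2) (mat2 (of_real s) (of_real g) (of_real g) (- of_real s))"

definition es :: "real \<Rightarrow> real \<Rightarrow> real" where
  "es g s = sqrt (s\<^sup>2 + g\<^sup>2) / 2"

text \<open>Eigenprojection P_s^sigma of H_s for the eigenvalue sigma * e_s (sigma = 1 or -1);
 since H_s has the two simple eigenvalues +-e_s, this is the spectral projection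
 (1/2)(I + sigma H_s / e_s), i.e. P^+ = (H + e I)/(2e), P^- = (e I - H)/(2e).\<close>
definition Ps :: "real \<Rightarrow> real \<Rightarrow> real \<Rightarrow> cmat" where
  "Ps g \<sigma> s = cscale (1/2) (mat 1 + cscale (of_real (\<sigma> / es g s)) (Hs g s))"

text \<open>sqrt(H_s) := sgn(H_s) sqrt|H_s| via functional calculus on H_s = e_s (P^+ - P^-).\<close>
definition sqrtH :: "real \<Rightarrow> real \<Rightarrow> cmat" where
  "sqrtH g s = cscale (of_real (sqrt (es g s))) (Ps g 1 s - Ps g (-1) s)"

definition Ls :: "(real \<Rightarrow> real) \<Rightarrow> real \<Rightarrow> real \<Rightarrow> cmat \<Rightarrow> cmat" where
  "Ls \<gamma> g s \<rho> = - cscale \<i> (comm (Hs g s) \<rho>)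
      - cscale (of_real (\<gamma> s / 2)) (comm (sqrtH g s) (comm (sqrtH g s) \<rho>))"

definition Es :: "real \<Rightarrow> real \<Rightarrow> cmat" where
  "Es g s = cscale (of_real (1 / (4 * es g s)))
     (mat2 (of_real g) (of_real (- s - 2 * es g s)) (of_real (- s + 2 * es g s)) (of_real (- g)))"

definition a_coef :: "(real \<Rightarrow> real) \<Rightarrow> real \<Rightarrow> real \<Rightarrow> real \<Rightarrow> real \<Rightarrow> cmat" where
  "a_coef \<gamma> g \<sigma> s s' =
     cscale (of_real (\<sigma> * g / (16 * (1 + (\<gamma> s)\<^sup>2) * (es g s) ^ 3)))
       (cscale (\<i> - of_real (\<gamma> s)) (Es g s) + adjoint (cscale (\<i> - of_real (\<gamma> s)) (Es g s)))
   + cscale (of_real (\<sigma> * g\<^sup>2 / 64 * integral {s'..s} (\<lambda>\<tau>. \<gamma> \<tau> / ((1 + (\<gamma> \<tau>)\<^sup>2) * (es g \<tau>) ^ 5))))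
       (Ps g (-1) s - Ps g 1 s)"

end

theory Submission
  imports Defs
begin

text \<open>
  Write \<open>H\<^sub>s = e\<^sub>s N\<^sub>s\<close> with \<open>N\<^sub>s\<close> a unit vector of the Bloch sphere, so that \<open>P\<^sub>s\<^sup>\<plusminus> = I/2 \<plusminus> N\<^sub>s/2\<close>.
  A traceless Hermitian matrix is written \<open>a N\<^sub>s + Re z N\<^sub>s\<^sup>\<bottom> + Im z \<sigma>\<^sub>y\<close> in the eigenframe; in these
  coordinates \<open>\<L>\<^sub>s\<close> kills \<open>a\<close> and multiplies \<open>z\<close> by \<open>2 e\<^sub>s (\<i> - \<gamma>\<^sub>s)\<close>, while the rotation of the frame,
  with angular speed \<open>\<theta>\<^sub>s = g/(4 e\<^sub>s\<^sup>2)\<close>, couples \<open>a\<close> and \<open>Re z\<close>.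
  Inserting \<open>\<rho> = I/2 + (\<sigma>/2 + \<epsilon> \<alpha> + \<epsilon>\<^sup>2 x) N\<^sub>s + \<dots>\<close> with \<open>z = \<epsilon> z\<^sub>1 + \<epsilon>\<^sup>2 z\<close>, the orders \<open>\<epsilon>\<^sup>0\<close> and
  \<open>\<epsilon>\<^sup>1\<close> cancel exactly for the coefficients of \<open>a\<^sup>\<plusminus>\<close>, and the remainder \<open>(x, z)\<close> solves a linear equation
  with the stiff dissipative coefficient \<open>2 e\<^sub>s (\<i> - \<gamma>\<^sub>s)/\<epsilon>\<close> and a forcing of order \<open>1/\<epsilon>\<close>.
  Its quasi-static part \<open>q\<close> absorbs this forcing, and an energy estimate bounds \<open>(x, z - q)\<close> by
  \<open>\<integral> \<theta>|q| + |q'|\<close>, independently of \<open>\<epsilon>\<close>. All these terms are \<open>O(e\<^sub>s\<^sup>-\<^sup>2)\<close>, which is integrable over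
  the line; this gives the bound uniform in \<open>s \<ge> s'\<close> when \<open>\<gamma>'\<close> and \<open>\<gamma>''\<close> are bounded.
\<close>

section \<open>Linear differential equations on a half-line\<close>

lemma integral_has_vector_derivative_ray:
  fixes f :: "real \<Rightarrow> 'v::banach"
  assumes "continuous_on {a..} f" and "a \<le> t"
  shows "((\<lambda>x. integral {a..x} f) has_vector_derivative f t) (at t within {a..})"
proof -
  have "continuous_on {a..t+1} f"
    using assms(1) by (rule continuous_on_subset) auto
  then have "((\<lambda>x. integral {a..x} f) has_vector_derivative f t) (at t within {a..t+1})"
    by (rule integral_has_vector_derivative) (use assms in auto)
  moreover have "at t within {a..} = at t within {a..t+1}"
    by (rule at_within_nhd[where S="{..<t+1}"]) (use assms in auto)
  ultimately show ?thesis
    by simp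
qed

lemma sqrt_one_plus_norm_sq_le:
  fixes u :: "real \<Rightarrow> 'v::real_inner"
  assumes u_deriv: "\<And>t. a \<le> t \<Longrightarrow> (u has_vector_derivative u' t) (at t within {a..})"
    and h_cont: "continuous_on {a..} h" and h_nonneg: "\<And>t. a \<le> t \<Longrightarrow> 0 \<le> h t"
    and growth: "\<And>t. a \<le> t \<Longrightarrow> inner (u t) (u' t) \<le> norm (u t) * h t"
    and "a \<le> s"
  shows "sqrt (1 + (norm (u s))\<^sup>2) \<le> sqrt (1 + (norm (u a))\<^sup>2) + integral {a..s} h"
proof -
  define G where "G t = sqrt (1 + inner (u t) (u t)) - integral {a..t} h" for t
  have G_deriv: "\<exists>y. (G has_real_derivative y) (at t within {a..}) \<and> y \<le> 0" if t: "a \<le> t" for t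
  proof -
    define N where "N = sqrt (1 + inner (u t) (u t))"
    have pos: "0 < 1 + inner (u t) (u t)"
      by (simp add: add_pos_nonneg)
    have N: "norm (u t) \<le> N" "0 < N"
      by (simp_all add: N_def add_pos_nonneg real_le_rsqrt flip: power2_norm_eq_inner)
    have "((\<lambda>t. inner (u t) (u t)) has_real_derivative 2 * inner (u t) (u' t)) (at t within {a..})"
      using bounded_bilinear.has_vector_derivative[OF bounded_bilinear_inner u_deriv[OF t] u_deriv[OF t]]
      by (simp add: has_real_derivative_iff_has_vector_derivative inner_commute)
    moreover have "((\<lambda>t. integral {a..t} h) has_real_derivative h t) (at t within {a..})"
      using integral_has_vector_derivative_ray[OF h_cont t]
      by (simp add: has_real_derivative_iff_has_vector_derivative)
    ultimately have "(G has_real_derivative inverse N / 2 * (2 * inner (u t) (u' t)) - h t) (at t within {a..})"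
      unfolding G_def[abs_def] N_def
      using pos by (auto intro!: derivative_eq_intros)
    moreover have "inner (u t) (u' t) \<le> N * h t"
      using growth[OF t] N(1) h_nonneg[OF t] by (meson mult_right_mono order_trans)
    then have "inverse N / 2 * (2 * inner (u t) (u' t)) \<le> h t"
      using N(2) by (simp add: field_simps)
    ultimately show ?thesis
      using N by auto
  qed
  have "continuous_on {a..} G"
    unfolding continuous_on_eq_continuous_within
    using G_deriv by (metis DERIV_continuous atLeast_iff)
  then have G_cont: "continuous_on {a..s} G"
    by (rule continuous_on_subset) auto
  have "G s \<le> G a"
  proof (rule DERIV_nonpos_imp_decreasing_open[OF \<open>a \<le> s\<close> _ G_cont])
    fix x assume x: "a < x" "x < s"
    then have "at x within {a..} = at x"
      by (intro at_within_interior) auto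
    then show "\<exists>y. (G has_real_derivative y) (at x) \<and> y \<le> 0"
      using G_deriv[of x] x by auto
  qed
  then show ?thesis
    by (simp add: G_def flip: power2_norm_eq_inner)
qed

locale lipschitz_ode_on_ray =
  fixes F :: "real \<Rightarrow> 'v::banach \<Rightarrow> 'v" and M :: "real \<Rightarrow> real" and a :: real
  assumes F_cont: "\<And>u. continuous_on {a..} u \<Longrightarrow> continuous_on {a..} (\<lambda>t. F t (u t))"
    and F_lipschitz: "\<And>t x y. a \<le> t \<Longrightarrow> norm (F t x - F t y) \<le> M t * norm (x - y)"
    and F_zero: "\<And>t. a \<le> t \<Longrightarrow> norm (F t 0) \<le> M t"
    and M_cont: "continuous_on {a..} M"
begin

definition weight :: "real \<Rightarrow> real" where
  "weight t = integral {a..t} (\<lambda>\<tau>. 2 * M \<tau>)"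

text \<open>Picard operator in the Bielecki-rescaled unknown \<open>u = exp (- weight) w\<close>;
  the weight makes it a contraction with constant \<open>1/2\<close> on the whole ray.\<close>
definition picard :: "'v \<Rightarrow> (real \<Rightarrow>\<^sub>C 'v) \<Rightarrow> real \<Rightarrow> 'v" where
  "picard w0 u t = exp (- weight t) *\<^sub>R (w0 + integral {a..t} (\<lambda>\<tau>. F \<tau> (exp (weight \<tau>) *\<^sub>R u \<tau>)))"

lemma M_nonneg: "a \<le> t \<Longrightarrow> 0 \<le> M t"
  using F_zero norm_ge_zero order_trans by blast

lemma weight_has_real_derivative: "a \<le> t \<Longrightarrow> (weight has_real_derivative 2 * M t) (at t within {a..})"
  unfolding weight_def[abs_def] has_real_derivative_iff_has_vector_derivative
  by (rule integral_has_vector_derivative_ray) (auto intro!: continuous_intros M_cont)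

lemma weight_cont: "continuous_on {a..} weight"
  using weight_has_real_derivative
  by (auto intro!: continuous_on_vector_derivative simp: has_real_derivative_iff_has_vector_derivative)

lemma weight_nonneg: "a \<le> t \<Longrightarrow> 0 \<le> weight t"
  unfolding weight_def
  by (rule integral_nonneg) (auto intro!: integrable_continuous_real continuous_on_subset[OF M_cont] continuous_intros M_nonneg)

lemma M_exp_weight_integrable: "(\<lambda>\<tau>. M \<tau> * exp (weight \<tau>)) integrable_on {a..t}"
  by (rule integrable_continuous_real, rule continuous_on_subset[of "{a..}"])
    (auto intro!: continuous_intros M_cont weight_cont)

lemma integral_M_exp_weight: "a \<le> t \<Longrightarrow> integral {a..t} (\<lambda>\<tau>. M \<tau> * exp (weight \<tau>)) = (exp (weight t) - 1) / 2"
proof -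
  assume t: "a \<le> t"
  have "((\<lambda>\<tau>. M \<tau> * exp (weight \<tau>)) has_integral exp (weight t) / 2 - exp (weight a) / 2) {a..t}"
  proof (rule fundamental_theorem_of_calculus[OF t])
    fix x assume x: "x \<in> {a..t}"
    then have "((\<lambda>\<tau>. exp (weight \<tau>) / 2) has_real_derivative M x * exp (weight x)) (at x within {a..})"
      by (auto intro!: derivative_eq_intros weight_has_real_derivative)
    then show "((\<lambda>\<tau>. exp (weight \<tau>) / 2) has_vector_derivative M x * exp (weight x)) (at x within {a..t})"
      by (auto simp: has_real_derivative_iff_has_vector_derivative intro: has_vector_derivative_within_subset)
  qed
  then show ?thesis
    by (auto dest: integral_unique simp: weight_def diff_divide_distrib)
qed

lemma F_bcontfun_cont: "continuous_on {a..} (\<lambda>\<tau>. F \<tau> (exp (weight \<tau>) *\<^sub>R apply_bcontfun u \<tau>))"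
  by (rule F_cont) (intro continuous_intros weight_cont continuous_on_apply_bcontfun)

lemma F_bcontfun_integrable: "(\<lambda>\<tau>. F \<tau> (exp (weight \<tau>) *\<^sub>R apply_bcontfun u \<tau>)) integrable_on {a..t}"
  by (rule integrable_continuous_real, rule continuous_on_subset[OF F_bcontfun_cont]) auto

lemma picard_cont: "continuous_on {a..} (picard w0 u)"
proof -
  have "continuous_on {a..} (\<lambda>t. integral {a..t} (\<lambda>\<tau>. F \<tau> (exp (weight \<tau>) *\<^sub>R apply_bcontfun u \<tau>)))"
    using integral_has_vector_derivative_ray[OF F_bcontfun_cont]
    by (auto intro!: continuous_on_vector_derivative)
  then show ?thesis
    unfolding picard_def by (intro continuous_intros weight_cont)
qed

lemma picard_norm_le: "a \<le> t \<Longrightarrow> norm (picard w0 u t) \<le> norm w0 + (1 + norm u) / 2"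
proof -
  assume t: "a \<le> t"
  have F_le: "norm (F \<tau> (exp (weight \<tau>) *\<^sub>R apply_bcontfun u \<tau>)) \<le> (1 + norm u) * (M \<tau> * exp (weight \<tau>))"
    if \<tau>: "a \<le> \<tau>" for \<tau>
  proof -
    let ?x = "exp (weight \<tau>) *\<^sub>R apply_bcontfun u \<tau>"
    have "norm (F \<tau> ?x) \<le> norm (F \<tau> 0) + norm (F \<tau> ?x - F \<tau> 0)"
      by (metis add.commute diff_add_cancel norm_triangle_ineq)
    also have "\<dots> \<le> M \<tau> + M \<tau> * norm ?x"
      using F_zero[OF \<tau>] F_lipschitz[OF \<tau>, of ?x 0] by simp
    also have "\<dots> \<le> M \<tau> + M \<tau> * (exp (weight \<tau>) * norm u)"
      using norm_bounded[of u \<tau>] M_nonneg[OF \<tau>] by (simp add: mult_left_mono)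
    also have "\<dots> \<le> (1 + norm u) * (M \<tau> * exp (weight \<tau>))"
      using M_nonneg[OF \<tau>] weight_nonneg[OF \<tau>] by (simp add: algebra_simps mult_le_cancel_left1)
    finally show ?thesis .
  qed
  have "norm (integral {a..t} (\<lambda>\<tau>. F \<tau> (exp (weight \<tau>) *\<^sub>R apply_bcontfun u \<tau>)))
      \<le> integral {a..t} (\<lambda>\<tau>. (1 + norm u) * (M \<tau> * exp (weight \<tau>)))"
    by (rule integral_norm_bound_integral)
      (auto intro!: F_le F_bcontfun_integrable integrable_on_mult_right M_exp_weight_integrable)
  also have "\<dots> = (1 + norm u) * ((exp (weight t) - 1) / 2)"
    using integral_M_exp_weight[OF t] by (simp add: M_exp_weight_integrable)
  finally have "norm (picard w0 u t) \<le> exp (- weight t) * (norm w0 + (1 + norm u) * ((exp (weight t) - 1) / 2))"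
    unfolding picard_def by (auto intro!: mult_left_mono order_trans[OF norm_triangle_ineq])
  also have "\<dots> = exp (- weight t) * norm w0 + (1 + norm u) * ((1 - exp (- weight t)) / 2)"
    by (simp add: algebra_simps exp_minus field_simps)
  also have "\<dots> \<le> norm w0 + (1 + norm u) * (1 / 2)"
    using weight_nonneg[OF t]
    by (intro add_mono mult_left_le_one_le mult_left_mono) auto
  finally show ?thesis
    by simp
qed

lemma picard_dist_le: "a \<le> t \<Longrightarrow> norm (picard w0 u t - picard w0 v t) \<le> dist u v / 2"
proof -
  assume t: "a \<le> t"
  let ?G = "\<lambda>u \<tau>. F \<tau> (exp (weight \<tau>) *\<^sub>R apply_bcontfun u \<tau>)"
  have G_le: "norm (?G u \<tau> - ?G v \<tau>) \<le> dist u v * (M \<tau> * exp (weight \<tau>))" if \<tau>: "a \<le> \<tau>" for \<tau>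
  proof -
    have "norm (?G u \<tau> - ?G v \<tau>) \<le> M \<tau> * (exp (weight \<tau>) * dist (apply_bcontfun u \<tau>) (apply_bcontfun v \<tau>))"
      using F_lipschitz[OF \<tau>, of "exp (weight \<tau>) *\<^sub>R apply_bcontfun u \<tau>" "exp (weight \<tau>) *\<^sub>R apply_bcontfun v \<tau>"]
      by (simp add: dist_norm flip: scaleR_diff_right)
    also have "\<dots> \<le> M \<tau> * (exp (weight \<tau>) * dist u v)"
      using M_nonneg[OF \<tau>] by (intro mult_left_mono dist_bounded) auto
    finally show ?thesis
      by (simp add: algebra_simps)
  qed
  have "norm (integral {a..t} (?G u) - integral {a..t} (?G v)) = norm (integral {a..t} (\<lambda>\<tau>. ?G u \<tau> - ?G v \<tau>))"
    by (simp add: integral_diff F_bcontfun_integrable)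
  also have "\<dots> \<le> integral {a..t} (\<lambda>\<tau>. dist u v * (M \<tau> * exp (weight \<tau>)))"
    by (rule integral_norm_bound_integral)
      (auto intro!: G_le integrable_diff F_bcontfun_integrable integrable_on_mult_right M_exp_weight_integrable)
  also have "\<dots> = dist u v * ((exp (weight t) - 1) / 2)"
    using integral_M_exp_weight[OF t] by (simp add: M_exp_weight_integrable)
  finally have "norm (picard w0 u t - picard w0 v t) \<le> exp (- weight t) * (dist u v * ((exp (weight t) - 1) / 2))"
    unfolding picard_def by (auto intro!: mult_left_mono simp flip: scaleR_diff_right)
  also have "\<dots> = dist u v * ((1 - exp (- weight t)) / 2)"
    by (simp add: algebra_simps exp_minus field_simps)
  also have "\<dots> \<le> dist u v / 2"
    by (simp add: mult_left_le)
  finally show ?thesis .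
qed

lemma solution_exists: "\<exists>w. w a = w0 \<and> (\<forall>t\<ge>a. (w has_vector_derivative F t (w t)) (at t within {a..}))"
proof -
  have bcont: "(\<lambda>t. picard w0 u (max a t)) \<in> bcontfun" for u
  proof (rule bcontfun_normI)
    show "continuous_on UNIV (\<lambda>t. picard w0 u (max a t))"
      by (rule continuous_on_compose2[OF picard_cont]) (auto intro!: continuous_intros)
    show "norm (picard w0 u (max a t)) \<le> norm w0 + (1 + norm u) / 2" for t
      by (rule picard_norm_le) simp
  qed
  define T where "T u = Bcontfun (\<lambda>t. picard w0 u (max a t))" for u
  have T_apply: "apply_bcontfun (T u) t = picard w0 u (max a t)" for u t
    using bcont[of u] by (simp add: T_def Bcontfun_inverse)
  have "dist (T u) (T v) \<le> 1/2 * dist u v" for u v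
    by (rule dist_bound) (use picard_dist_le in \<open>simp add: T_apply dist_norm\<close>)
  then obtain u where u: "T u = u"
    using banach_fix_type[of "1/2" T] by auto
  define w where "w t = exp (weight t) *\<^sub>R apply_bcontfun u t" for t
  have w_eq: "w t = w0 + integral {a..t} (\<lambda>\<tau>. F \<tau> (w \<tau>))" if "a \<le> t" for t
    using T_apply[of u t] that by (simp add: u w_def picard_def max_def flip: exp_add)
  show ?thesis
  proof (intro exI conjI allI impI)
    show "w a = w0"
      using w_eq[of a] by simp
    fix t assume t: "a \<le> t"
    have "((\<lambda>t. w0 + integral {a..t} (\<lambda>\<tau>. F \<tau> (w \<tau>))) has_vector_derivative F t (w t)) (at t within {a..})"
      using integral_has_vector_derivative_ray[OF F_bcontfun_cont[of u] t]
      by (auto intro!: derivative_eq_intros simp: w_def)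
    then show "(w has_vector_derivative F t (w t)) (at t within {a..})"
      by (rule has_vector_derivative_transform_within[where d=1]) (use t w_eq in auto)
  qed
qed

end

section \<open>Traceless Hermitian \<open>2\<times>2\<close> matrices in a rotating frame\<close>

lemma cmat_eq_iff: "(A::cmat) = B \<longleftrightarrow> A$1$1 = B$1$1 \<and> A$1$2 = B$1$2 \<and> A$2$1 = B$2$1 \<and> A$2$2 = B$2$2"
  by (auto simp: vec_eq_iff forall_2)

lemma mat2_nth [simp]:
  "mat2 a b c d $1$1 = a" "mat2 a b c d $1$2 = b" "mat2 a b c d $2$1 = c" "mat2 a b c d $2$2 = d"
  by (simp_all add: mat2_def)

lemma matrix_matrix_mult_cmat_nth [simp]: "((A::cmat) ** B)$i$j = A$i$1 * B$1$j + A$i$2 * B$2$j"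
  by (simp add: matrix_matrix_mult_def UNIV_2)

lemma cscale_nth [simp]: "cscale c A $i$j = c * A$i$j"
  by (simp add: cscale_def)

lemma adjoint_nth [simp]: "adjoint A $i$j = cnj (A$j$i)"
  by (simp add: adjoint_def)

lemma mat_1_cmat_nth [simp]:
  "(mat 1 :: cmat)$1$1 = 1" "(mat 1 :: cmat)$1$2 = 0" "(mat 1 :: cmat)$2$1 = 0" "(mat 1 :: cmat)$2$2 = 1"
  by (simp_all add: mat_def)

lemma comm_add_right: "comm A (B + C) = comm A B + comm A C"
  by (simp add: cmat_eq_iff comm_def algebra_simps)

lemma comm_scaleR_left: "comm (r *\<^sub>R A) B = r *\<^sub>R comm A B"
  by (simp add: cmat_eq_iff comm_def algebra_simps)

lemma comm_scaleR_mat_1: "comm A (r *\<^sub>R mat 1) = 0"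
  by (simp add: cmat_eq_iff comm_def)

lemma comm_cscale_right: "comm A (cscale c B) = cscale c (comm A B)"
  by (simp add: cmat_eq_iff comm_def algebra_simps)

definition pauli_x :: cmat where "pauli_x = mat2 0 1 1 0"
definition pauli_y :: cmat where "pauli_y = mat2 0 (- \<i>) \<i> 0"
definition pauli_z :: cmat where "pauli_z = mat2 1 0 0 (- 1)"

definition frame_mat :: "real \<Rightarrow> real \<Rightarrow> real \<Rightarrow> complex \<Rightarrow> cmat" where
  "frame_mat c d a z = a *\<^sub>R (c *\<^sub>R pauli_z + d *\<^sub>R pauli_x)
     + Re z *\<^sub>R (c *\<^sub>R pauli_x - d *\<^sub>R pauli_z) + Im z *\<^sub>R pauli_y"

lemma frame_mat_nth [simp]:
  "frame_mat c d a z $1$1 = of_real (a * c - Re z * d)"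
  "frame_mat c d a z $1$2 = of_real (a * d + Re z * c) - \<i> * of_real (Im z)"
  "frame_mat c d a z $2$1 = of_real (a * d + Re z * c) + \<i> * of_real (Im z)"
  "frame_mat c d a z $2$2 = - of_real (a * c - Re z * d)"
  by (simp_all add: frame_mat_def pauli_x_def pauli_y_def pauli_z_def complex_eq_iff)

lemma comm_frame_mat:
  assumes "c\<^sup>2 + d\<^sup>2 = 1"
  shows "comm (frame_mat c d 1 0) (frame_mat c d a z) = cscale (2 * \<i>) (frame_mat c d 0 (\<i> * z))"
  using assms by (simp add: cmat_eq_iff comm_def complex_eq_iff algebra_simps power2_eq_square) algebra

lemma frame_mat_add: "frame_mat c d a z + frame_mat c d b w = frame_mat c d (a + b) (z + w)"
  by (simp add: frame_mat_def algebra_simps)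

lemma frame_mat_scaleR: "r *\<^sub>R frame_mat c d a z = frame_mat c d (r * a) (of_real r * z)"
  by (simp add: frame_mat_def algebra_simps)

lemma norm_frame_mat:
  assumes "c\<^sup>2 + d\<^sup>2 = 1"
  shows "norm (frame_mat c d a z) = sqrt 2 * norm (a, z)"
proof -
  have "(norm (frame_mat c d a z))\<^sup>2 = (sqrt 2 * norm (a, z))\<^sup>2"
    using assms by (simp add: norm_vec_def L2_set_def UNIV_2 norm_Pair power_mult_distrib cmod_power2) algebra
  then show ?thesis
    by (simp add: power2_eq_iff_nonneg)
qed

section \<open>The Landau--Zener Hamiltonian in its eigenframe\<close>

lemma es_sq: "(es g s)\<^sup>2 = (s\<^sup>2 + g\<^sup>2) / 4"
  by (simp add: es_def power_divide)

locale landau_zener =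
  fixes g :: real
  assumes g_pos: "g > 0"
begin

definition frame :: "real \<Rightarrow> real \<Rightarrow> complex \<Rightarrow> cmat" where
  "frame s = frame_mat (s / (2 * es g s)) (g / (2 * es g s))"

definition \<theta> :: "real \<Rightarrow> real" where
  "\<theta> s = g / (4 * (es g s)\<^sup>2)"

lemma es_pos: "0 < es g s"
  using g_pos by (simp add: es_def add_pos_nonneg sum_power2_gt_zero_iff)

lemma frame_unit: "(s / (2 * es g s))\<^sup>2 + (g / (2 * es g s))\<^sup>2 = 1"
proof -
  have "s\<^sup>2 + g\<^sup>2 > 0"
    using g_pos by (simp add: add_nonneg_pos)
  then show ?thesis
    by (simp add: power_divide power_mult_distrib es_sq flip: add_divide_distrib)
qed

lemma Hs_eq: "Hs g s = es g s *\<^sub>R frame s 1 0"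
  using es_pos[of s] by (simp add: cmat_eq_iff Hs_def frame_def complex_eq_iff)

lemma sqrtH_eq: "sqrtH g s = sqrt (es g s) *\<^sub>R frame s 1 0"
  using es_pos[of s] by (simp add: cmat_eq_iff sqrtH_def Ps_def Hs_def frame_def complex_eq_iff field_simps)

lemma Ps_eq: "Ps g \<sigma> s = (1/2) *\<^sub>R mat 1 + frame s (\<sigma> / 2) 0"
  using es_pos[of s] by (simp add: cmat_eq_iff Ps_def Hs_def frame_def complex_eq_iff field_simps)

lemma comm_frame: "comm (frame s 1 0) (frame s a z) = cscale (2 * \<i>) (frame s 0 (\<i> * z))"
  unfolding frame_def by (rule comm_frame_mat[OF frame_unit])

lemma comm_scaled_frame:
  "comm (r *\<^sub>R frame s 1 0) (frame s a z) = cscale (of_real (2 * r) * \<i>) (frame s 0 (\<i> * z))"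
  unfolding comm_scaleR_left comm_frame
  by (simp add: cmat_eq_iff scaleR_conv_of_real[where 'a=complex])

lemma Ls_frame:
  "Ls \<gamma> g s ((1/2) *\<^sub>R mat 1 + frame s a z) = frame s 0 (of_real (2 * es g s) * (\<i> - of_real (\<gamma> s)) * z)"
proof -
  have "sqrt (es g s) * sqrt (es g s) = es g s"
    using es_pos[of s] by simp
  then show ?thesis
    unfolding Ls_def Hs_eq sqrtH_eq comm_add_right comm_scaleR_mat_1 add_0_left comm_scaled_frame
      comm_cscale_right
    by (simp add: cmat_eq_iff frame_def complex_eq_iff algebra_simps)
qed

lemma a_coef_eq:
  "a_coef \<gamma> g \<sigma> s s' = frame s (- (\<sigma> * g\<^sup>2 / 64 * integral {s'..s} (\<lambda>\<tau>. \<gamma> \<tau> / ((1 + (\<gamma> \<tau>)\<^sup>2) * (es g \<tau>) ^ 5))))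
     (of_real (\<sigma> * g / (16 * es g s ^ 3)) * inverse (of_real (\<gamma> s) - \<i>))"
proof -
  define \<kappa> where "\<kappa> = inverse (of_real (\<gamma> s) - \<i>)"
  have "1 + (\<gamma> s)\<^sup>2 \<noteq> 0"
    by (smt (verit) zero_le_power2)
  moreover have "Re \<kappa> = \<gamma> s / (1 + (\<gamma> s)\<^sup>2)" "Im \<kappa> = 1 / (1 + (\<gamma> s)\<^sup>2)"
    by (simp_all add: \<kappa>_def Re_divide Im_divide power2_eq_square)
  ultimately show ?thesis
    unfolding \<kappa>_def[symmetric] using es_pos[of s]
    apply (simp add: cmat_eq_iff a_coef_def Es_def Ps_def Hs_def frame_def complex_eq_iff)
    apply (simp add: divide_simps)
    apply (simp_all add: algebra_simps power3_eq_cube)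
    done
qed

lemma frame_add: "frame s a z + frame s b w = frame s (a + b) (z + w)"
  by (simp add: frame_def frame_mat_add)

lemma scaleR_frame: "r *\<^sub>R frame s a z = frame s (r * a) (of_real r * z)"
  by (simp add: frame_def frame_mat_scaleR)

lemma norm_frame: "norm (frame s a z) = sqrt 2 * norm (a, z)"
  unfolding frame_def by (rule norm_frame_mat[OF frame_unit])

lemma es_has_real_derivative: "(es g has_real_derivative s / (4 * es g s)) (at s)"
proof -
  have "s\<^sup>2 + g\<^sup>2 > 0"
    using g_pos by (simp add: add_nonneg_pos)
  then have "((\<lambda>s. sqrt (s\<^sup>2 + g\<^sup>2) / 2) has_real_derivative inverse (sqrt (s\<^sup>2 + g\<^sup>2)) / 2 * (2 * s) / 2) (at s)"
    by (auto intro!: derivative_eq_intros)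
  then show ?thesis
    by (simp add: es_def[abs_def] field_simps)
qed

lemma es_cont: "continuous_on UNIV (es g)"
  using es_has_real_derivative by (auto intro!: continuous_at_imp_continuous_on DERIV_isCont)

lemma frame_has_vector_derivative:
  assumes "(a has_real_derivative a') (at s within S)" and "(z has_vector_derivative z') (at s within S)"
  shows "((\<lambda>s. frame s (a s) (z s)) has_vector_derivative
      frame s (a' + \<theta> s * Re (z s)) (z' - of_real (\<theta> s * a s))) (at s within S)"
proof -
  define c where "c s = s / (2 * es g s)" for s
  define d where "d s = g / (2 * es g s)" for s
  have e: "es g s \<noteq> 0" "4 * (es g s)\<^sup>2 = s\<^sup>2 + g\<^sup>2"
    using es_pos[of s] by (simp_all add: es_sq)
  have "(c has_real_derivative \<theta> s * d s) (at s within S)"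
    unfolding c_def[abs_def] using e
    by (auto intro!: derivative_eq_intros has_field_derivative_at_within[OF es_has_real_derivative]
        simp: \<theta>_def d_def field_simps power2_eq_square)
  moreover have "(d has_real_derivative - (\<theta> s * c s)) (at s within S)"
    unfolding d_def[abs_def] using e
    by (auto intro!: derivative_eq_intros has_field_derivative_at_within[OF es_has_real_derivative]
        simp: \<theta>_def c_def field_simps power2_eq_square)
  ultimately have N: "((\<lambda>s. c s *\<^sub>R pauli_z + d s *\<^sub>R pauli_x) has_vector_derivative
      - \<theta> s *\<^sub>R (c s *\<^sub>R pauli_x - d s *\<^sub>R pauli_z)) (at s within S)"
    and P: "((\<lambda>s. c s *\<^sub>R pauli_x - d s *\<^sub>R pauli_z) has_vector_derivative
      \<theta> s *\<^sub>R (c s *\<^sub>R pauli_z + d s *\<^sub>R pauli_x)) (at s within S)"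
    by (auto intro!: derivative_eq_intros simp: algebra_simps)
  define Nv where "Nv t = c t *\<^sub>R pauli_z + d t *\<^sub>R pauli_x" for t
  define Pv where "Pv t = c t *\<^sub>R pauli_x - d t *\<^sub>R pauli_z" for t
  have fr: "frame t b w = b *\<^sub>R Nv t + Re w *\<^sub>R Pv t + Im w *\<^sub>R pauli_y" for t b w
    by (simp add: frame_def frame_mat_def c_def d_def Nv_def Pv_def)
  have "((\<lambda>t. a t *\<^sub>R Nv t + Re (z t) *\<^sub>R Pv t + Im (z t) *\<^sub>R pauli_y) has_vector_derivative
     a s *\<^sub>R (- \<theta> s *\<^sub>R Pv s) + a' *\<^sub>R Nv s + (Re (z s) *\<^sub>R (\<theta> s *\<^sub>R Nv s) + Re z' *\<^sub>R Pv s)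
     + (Im (z s) *\<^sub>R 0 + Im z' *\<^sub>R pauli_y)) (at s within S)"
    unfolding Nv_def Pv_def
    by (intro has_vector_derivative_add has_vector_derivative_scaleR N P has_vector_derivative_const
        has_field_derivative_Re has_field_derivative_Im assms)
  then show ?thesis
    unfolding fr by (simp add: algebra_simps)
qed


definition w :: "real \<Rightarrow> real" where
  "w s = 1 / es g s"

lemma w_pos: "0 < w s"
  using es_pos[of s] by (simp add: w_def)

lemma es_mult_w: "es g s * w s = 1"
  using es_pos[of s] by (simp add: w_def)

lemma w_sq: "(w s)\<^sup>2 = 4 / (s\<^sup>2 + g\<^sup>2)"
  by (simp add: w_def power_divide es_sq)

lemma w_le: "w s \<le> 2 / g"
proof -
  have "(g / 2)\<^sup>2 \<le> (es g s)\<^sup>2"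
    by (simp add: es_sq power_divide)
  then have "g / 2 \<le> es g s"
    by (rule power2_le_imp_le) (use es_pos[of s] in simp)
  then have "1 / es g s \<le> 1 / (g / 2)"
    using g_pos by (intro divide_left_mono) auto
  then show ?thesis
    by (simp add: w_def)
qed

lemma w_power_le: "w s ^ n \<le> (2 / g) ^ n"
  using w_le[of s] w_pos[of s] by (intro power_mono) auto

lemma abs_mult_w_le: "\<bar>s * w s\<bar> \<le> 2"
proof -
  have "\<bar>s\<bar> \<le> 2 * es g s"
    unfolding es_def using real_sqrt_le_mono[of "s\<^sup>2" "s\<^sup>2 + g\<^sup>2"] by simp
  then show ?thesis
    using es_pos[of s] by (simp add: w_def abs_mult pos_divide_le_eq)
qed

lemma \<theta>_eq: "\<theta> s = g / 4 * (w s)\<^sup>2"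
  by (simp add: \<theta>_def w_def power_divide)

lemma w_has_real_derivative: "(w has_real_derivative - (s * w s ^ 3) / 4) (at s)"
proof -
  have "(w has_real_derivative - (s / (4 * es g s)) / (es g s)\<^sup>2) (at s)"
    unfolding w_def[abs_def] using es_pos[of s]
    by (auto intro!: derivative_eq_intros es_has_real_derivative simp: power2_eq_square)
  moreover have "- (s / (4 * es g s)) / (es g s)\<^sup>2 = - (s * w s ^ 3) / 4"
    using es_pos[of s] by (simp add: w_def field_simps power2_eq_square power3_eq_cube)
  ultimately show ?thesis
    by (rule DERIV_cong)
qed

lemma w_cont: "continuous_on UNIV w"
  using w_has_real_derivative by (auto intro!: continuous_at_imp_continuous_on DERIV_isCont)

lemma \<theta>_nonneg: "0 \<le> \<theta> s"
  using g_pos by (simp add: \<theta>_def)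

lemma \<theta>_cont: "continuous_on UNIV \<theta>"
  unfolding \<theta>_eq[abs_def] by (intro continuous_intros w_cont)

lemma integral_w_sq_le: "s' \<le> s \<Longrightarrow> integral {s'..s} (\<lambda>\<tau>. (w \<tau>)\<^sup>2) \<le> 4 * pi / g"
proof -
  assume s: "s' \<le> s"
  define A where "A \<tau> = 4 / g * arctan (\<tau> / g)" for \<tau>
  have "((\<lambda>\<tau>. (w \<tau>)\<^sup>2) has_integral (A s - A s')) {s'..s}"
  proof (rule fundamental_theorem_of_calculus[OF s])
    fix x
    have "(A has_real_derivative 4 / g * (inverse (1 + (x / g)\<^sup>2) * (1 / g))) (at x)"
      unfolding A_def[abs_def] using g_pos by (auto intro!: derivative_eq_intros)
    moreover have "4 / g * (inverse (1 + (x / g)\<^sup>2) * (1 / g)) = (w x)\<^sup>2"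
      unfolding w_sq using g_pos by (simp add: field_simps power2_eq_square)
    ultimately show "(A has_vector_derivative (w x)\<^sup>2) (at x within {s'..s})"
      by (simp add: has_real_derivative_iff_has_vector_derivative has_vector_derivative_at_within)
  qed
  then have "integral {s'..s} (\<lambda>\<tau>. (w \<tau>)\<^sup>2) = A s - A s'"
    by (rule integral_unique)
  also have "\<dots> \<le> 4 / g * (pi / 2) - 4 / g * (- (pi / 2))"
    using g_pos arctan_ubound[of "s / g"] arctan_lbound[of "s' / g"] unfolding A_def
    by (intro diff_mono mult_left_mono) auto
  finally show ?thesis
    by simp
qed

lemma integral_le_w_sq:
  assumes "s' \<le> s" and "continuous_on {s'..s} f" and "\<And>\<tau>. \<tau> \<in> {s'..s} \<Longrightarrow> f \<tau> \<le> C * (w \<tau>)\<^sup>2" and "0 \<le> C"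
  shows "integral {s'..s} f \<le> C * (4 * pi / g)"
proof -
  have w_int: "(\<lambda>\<tau>. (w \<tau>)\<^sup>2) integrable_on {s'..s}"
    by (intro integrable_continuous_real continuous_intros continuous_on_subset[OF w_cont]) auto
  have "integral {s'..s} f \<le> integral {s'..s} (\<lambda>\<tau>. C * (w \<tau>)\<^sup>2)"
    by (intro integral_le integrable_continuous_real assms integrable_on_mult_right w_int) auto
  also have "\<dots> = C * integral {s'..s} (\<lambda>\<tau>. (w \<tau>)\<^sup>2)"
    using w_int by simp
  also have "\<dots> \<le> C * (4 * pi / g)"
    by (rule mult_left_mono[OF integral_w_sq_le[OF assms(1)] assms(4)])
  finally show ?thesis .
qed

end

section \<open>The adiabatic expansion with dephasing\<close>

locale landau_zener_dephasing = landau_zener +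
  fixes \<gamma> \<gamma>' \<gamma>'' :: "real \<Rightarrow> real"
  assumes gamma_nonneg: "\<And>s. 0 \<le> \<gamma> s"
    and gamma_deriv: "\<And>s. (\<gamma> has_real_derivative \<gamma>' s) (at s)"
    and gamma'_deriv: "\<And>s. (\<gamma>' has_real_derivative \<gamma>'' s) (at s)"
    and gamma''_cont: "continuous_on UNIV \<gamma>''"
begin

text \<open>\<open>\<kappa> = (\<gamma> - \<i>)\<^sup>-\<^sup>1\<close> inverts the dissipative coefficient; \<open>z1\<close> and \<open>q\<close> arise by applying it to
  the unbalanced terms of order \<open>\<epsilon>\<^sup>0\<close> and \<open>\<epsilon>\<^sup>1\<close> (see \<open>z1_balance\<close> and \<open>q_balance\<close>).\<close>
definition \<kappa> :: "real \<Rightarrow> complex" where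
  "\<kappa> s = inverse (of_real (\<gamma> s) - \<i>)"

definition j :: "real \<Rightarrow> real" where
  "j s = \<gamma> s / ((1 + (\<gamma> s)\<^sup>2) * es g s ^ 5)"

definition J :: "real \<Rightarrow> real \<Rightarrow> real" where
  "J s' s = integral {s'..s} j"

definition \<alpha> :: "real \<Rightarrow> real \<Rightarrow> real \<Rightarrow> real" where
  "\<alpha> \<sigma> s' s = - (\<sigma> * g\<^sup>2 / 64 * J s' s)"

definition z1 :: "real \<Rightarrow> real \<Rightarrow> complex" where
  "z1 \<sigma> s = of_real (\<sigma> * g / 16 * w s ^ 3) * \<kappa> s"

definition z1' :: "real \<Rightarrow> real \<Rightarrow> complex" where
  "z1' \<sigma> s = of_real (\<sigma> * g / 16) *
     (- of_real (\<gamma>' s * w s ^ 3) * \<kappa> s ^ 2 - of_real (3/4 * s * w s ^ 5) * \<kappa> s)"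

definition q :: "real \<Rightarrow> real \<Rightarrow> real \<Rightarrow> complex" where
  "q \<sigma> s' s = of_real (\<sigma> * g / 32) * (of_real (\<gamma>' s * w s ^ 4) * \<kappa> s ^ 3
      + of_real (3/4 * s * w s ^ 6) * \<kappa> s ^ 2 - of_real (g\<^sup>2/16 * w s ^ 3 * J s' s) * \<kappa> s)"

definition q' :: "real \<Rightarrow> real \<Rightarrow> real \<Rightarrow> complex" where
  "q' \<sigma> s' s = of_real (\<sigma> * g / 32) * (
      of_real (\<gamma>'' s * w s ^ 4) * \<kappa> s ^ 3
    - of_real (3 * (\<gamma>' s)\<^sup>2 * w s ^ 4) * \<kappa> s ^ 4
    - of_real (5/2 * s * \<gamma>' s * w s ^ 6) * \<kappa> s ^ 3
    + of_real (3/4 * w s ^ 6) * \<kappa> s ^ 2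
    - of_real (9/8 * s\<^sup>2 * w s ^ 8) * \<kappa> s ^ 2
    + of_real (g\<^sup>2/16 * \<gamma>' s * w s ^ 3 * J s' s) * \<kappa> s ^ 2
    + of_real (3 * g\<^sup>2/64 * s * w s ^ 5 * J s' s) * \<kappa> s
    - of_real (g\<^sup>2/16 * w s ^ 3 * j s) * \<kappa> s)"

lemma a_coef_eq_frame: "a_coef \<gamma> g \<sigma> s s' = frame s (\<alpha> \<sigma> s' s) (z1 \<sigma> s)"
  by (simp add: a_coef_eq \<alpha>_def J_def j_def[abs_def] z1_def \<kappa>_def w_def power_one_over)

lemma gamma_cont: "continuous_on UNIV \<gamma>"
  using gamma_deriv by (auto intro!: continuous_at_imp_continuous_on DERIV_isCont)

lemma gamma'_cont: "continuous_on UNIV \<gamma>'"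
  using gamma'_deriv by (auto intro!: continuous_at_imp_continuous_on DERIV_isCont)

lemma gamma_i_nonzero: "of_real (\<gamma> s) - \<i> \<noteq> 0"
  by (simp add: complex_eq_iff)

lemma norm_\<kappa>_le: "cmod (\<kappa> s) \<le> 1"
proof -
  have "1 \<le> cmod (of_real (\<gamma> s) - \<i>)"
    by (simp add: cmod_def)
  then show ?thesis
    by (simp add: \<kappa>_def norm_inverse inverse_le_1_iff)
qed

lemma \<kappa>_has_vector_derivative: "(\<kappa> has_vector_derivative - (of_real (\<gamma>' s) * \<kappa> s ^ 2)) (at s within S)"
proof -
  have "((\<lambda>s. of_real (\<gamma> s) - \<i>) has_vector_derivative of_real (\<gamma>' s)) (at s within S)"
    by (auto intro!: derivative_eq_intros has_field_derivative_at_within[OF gamma_deriv])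
  from field_vector_diff_chain_within[OF this DERIV_inverse[OF gamma_i_nonzero]]
  show ?thesis
    by (simp add: \<kappa>_def[abs_def] o_def power2_eq_square)
qed

lemma \<kappa>_power_has_vector_derivative:
  "((\<lambda>s. \<kappa> s ^ n) has_vector_derivative - (of_real (of_nat n * \<gamma>' s) * \<kappa> s ^ Suc n)) (at s within S)"
proof -
  have "((\<lambda>z. z ^ n) has_field_derivative of_nat n * (1 * \<kappa> s ^ (n - Suc 0))) (at (\<kappa> s) within \<kappa> ` S)"
    by (rule DERIV_power[OF DERIV_ident])
  from field_vector_diff_chain_within[OF \<kappa>_has_vector_derivative[of s S] this]
  show ?thesis
    by (cases n) (simp_all add: o_def algebra_simps power2_eq_square)
qed

lemma \<kappa>_cont: "continuous_on UNIV \<kappa>"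
  by (rule continuous_on_vector_derivative[OF \<kappa>_has_vector_derivative])

lemma j_cont: "continuous_on UNIV j"
proof -
  have "1 + (\<gamma> s)\<^sup>2 \<noteq> 0" for s
    by (smt (verit) zero_le_power2)
  then show ?thesis
    unfolding j_def using es_pos by (intro continuous_intros gamma_cont es_cont) (auto simp: less_le)
qed

lemma j_eq: "j s = \<gamma> s / (1 + (\<gamma> s)\<^sup>2) * w s ^ 5"
  by (simp add: j_def w_def power_one_over)

lemma Re_\<kappa>: "Re (\<kappa> s) = \<gamma> s / (1 + (\<gamma> s)\<^sup>2)"
  by (simp add: \<kappa>_def Re_divide power2_eq_square)

lemma Re_z1: "Re (z1 \<sigma> s) = \<sigma> * g / 16 * w s ^ 3 * (\<gamma> s / (1 + (\<gamma> s)\<^sup>2))"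
  by (simp add: z1_def Re_\<kappa>)

lemma J_has_real_derivative: "s' \<le> s \<Longrightarrow> (J s' has_real_derivative j s) (at s within {s'..})"
  unfolding J_def[abs_def] has_real_derivative_iff_has_vector_derivative
  by (rule integral_has_vector_derivative_ray) (auto intro: continuous_on_subset[OF j_cont])

lemma J_cont: "continuous_on {s'..} (J s')"
  using J_has_real_derivative
  by (auto intro!: continuous_on_vector_derivative simp: has_real_derivative_iff_has_vector_derivative)

lemma z1_has_vector_derivative: "(z1 \<sigma> has_vector_derivative z1' \<sigma> s) (at s within S)"
  unfolding z1_def[abs_def] z1'_def
  by (rule derivative_eq_intros \<kappa>_has_vector_derivative has_field_derivative_at_within[OF w_has_real_derivative] refl)+
    (simp add: algebra_simps eval_nat_numeral)

lemma z1'_cont: "continuous_on UNIV (z1' \<sigma>)"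
  unfolding z1'_def by (intro continuous_intros \<kappa>_cont w_cont gamma'_cont) auto

lemma \<alpha>_has_real_derivative:
  assumes "s' \<le> s"
  shows "(\<alpha> \<sigma> s' has_real_derivative - (\<theta> s * Re (z1 \<sigma> s))) (at s within {s'..})"
proof -
  have "(\<alpha> \<sigma> s' has_real_derivative - (\<sigma> * g\<^sup>2 / 64 * j s)) (at s within {s'..})"
    unfolding \<alpha>_def[abs_def] by (auto intro!: derivative_eq_intros J_has_real_derivative assms)
  moreover have "\<sigma> * g\<^sup>2 / 64 * j s = \<theta> s * Re (z1 \<sigma> s)"
    by (simp add: j_eq Re_z1 \<theta>_eq eval_nat_numeral algebra_simps)
  ultimately show ?thesis
    by simp
qed

lemma \<alpha>_cont: "continuous_on {s'..} (\<alpha> \<sigma> s')"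
  unfolding \<alpha>_def by (intro continuous_intros J_cont)

lemma q_has_vector_derivative:
  assumes "s' \<le> s"
  shows "(q \<sigma> s' has_vector_derivative q' \<sigma> s' s) (at s within {s'..})"
  unfolding q_def[abs_def] q'_def
  by (rule derivative_eq_intros \<kappa>_has_vector_derivative \<kappa>_power_has_vector_derivative
      has_field_derivative_at_within[OF w_has_real_derivative]
      has_field_derivative_at_within[OF gamma'_deriv] J_has_real_derivative refl assms)+
    (simp add: j_def algebra_simps eval_nat_numeral)

lemma q_cont: "continuous_on {s'..} (q \<sigma> s')"
  using q_has_vector_derivative by (auto intro!: continuous_on_vector_derivative)

lemma q'_cont: "continuous_on {s'..} (q' \<sigma> s')"
  unfolding q'_def
  by (intro continuous_intros continuous_on_subset[OF \<kappa>_cont] continuous_on_subset[OF w_cont]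
      continuous_on_subset[OF gamma'_cont] continuous_on_subset[OF gamma''_cont] continuous_on_subset[OF j_cont]
      J_cont subset_UNIV)

lemma \<kappa>_inverse: "(of_real (\<gamma> s) - \<i>) * \<kappa> s = 1"
  using gamma_i_nonzero by (simp add: \<kappa>_def)

lemma z1_balance: "of_real (\<theta> s * (\<sigma> / 2)) + of_real (2 * es g s) * (\<i> - of_real (\<gamma> s)) * z1 \<sigma> s = 0"
proof -
  have "of_real (es g s) * of_real (w s) = (1::complex)"
    by (metis es_mult_w of_real_1 of_real_mult)
  then show ?thesis
    unfolding z1_def \<theta>_eq using \<kappa>_inverse[of s]
    by (simp add: algebra_simps eval_nat_numeral) algebra
qed

lemma q_balance: "of_real (2 * es g s) * (\<i> - of_real (\<gamma> s)) * q \<sigma> s' s = z1' \<sigma> s - of_real (\<theta> s * \<alpha> \<sigma> s' s)"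
proof -
  have "of_real (es g s) * of_real (w s) = (1::complex)"
    by (metis es_mult_w of_real_1 of_real_mult)
  then show ?thesis
    unfolding q_def z1'_def \<theta>_eq \<alpha>_def using \<kappa>_inverse[of s]
    by (simp add: algebra_simps eval_nat_numeral) algebra
qed

definition damping :: "real \<Rightarrow> real \<Rightarrow> complex" where
  "damping \<epsilon> s = of_real (2 * es g s / \<epsilon>) * (\<i> - of_real (\<gamma> s))"

definition rem_lin :: "real \<Rightarrow> real \<Rightarrow> real \<times> complex \<Rightarrow> real \<times> complex" where
  "rem_lin \<epsilon> s p = (- (\<theta> s * Re (snd p)), damping \<epsilon> s * snd p + of_real (\<theta> s * fst p))"

definition rem_forcing :: "real \<Rightarrow> real \<Rightarrow> real \<Rightarrow> real \<Rightarrow> complex" where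
  "rem_forcing \<sigma> \<epsilon> s' s = (of_real (\<theta> s * \<alpha> \<sigma> s' s) - z1' \<sigma> s) / of_real \<epsilon>"

text \<open>The remainder starts at its quasi-static value, so that \<open>(x, z - q)\<close> starts at \<open>0\<close>.\<close>
definition rem_ode :: "real \<Rightarrow> real \<Rightarrow> real \<Rightarrow> (real \<Rightarrow> real \<times> complex) \<Rightarrow> bool" where
  "rem_ode \<sigma> \<epsilon> s' p \<longleftrightarrow> p s' = (0, q \<sigma> s' s') \<and>
     (\<forall>s\<ge>s'. (p has_vector_derivative rem_lin \<epsilon> s (p s) + (0, rem_forcing \<sigma> \<epsilon> s' s)) (at s within {s'..}))"

definition rem_sol :: "real \<Rightarrow> real \<Rightarrow> real \<Rightarrow> real \<Rightarrow> real \<times> complex" where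
  "rem_sol \<sigma> \<epsilon> s' = (SOME p. rem_ode \<sigma> \<epsilon> s' p)"

lemma rem_lin_diff: "rem_lin \<epsilon> s p - rem_lin \<epsilon> s p' = rem_lin \<epsilon> s (p - p')"
  by (simp add: rem_lin_def algebra_simps)

lemma Re_damping_nonpos: "0 < \<epsilon> \<Longrightarrow> Re (damping \<epsilon> s) \<le> 0"
  using es_pos[of s] gamma_nonneg[of s] by (simp add: damping_def)

lemma norm_damping_le: "0 < \<epsilon> \<Longrightarrow> cmod (damping \<epsilon> s) \<le> 2 * es g s * (1 + \<gamma> s) / \<epsilon>"
  using norm_triangle_ineq4[of \<i> "of_real (\<gamma> s)"] gamma_nonneg[of s] es_pos[of s]
  by (simp add: damping_def norm_mult norm_divide mult_left_mono divide_right_mono)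

lemma norm_rem_lin_le:
  assumes "0 < \<epsilon>"
  shows "norm (rem_lin \<epsilon> s p) \<le> (2 * \<theta> s + 2 * es g s * (1 + \<gamma> s) / \<epsilon>) * norm p"
proof -
  obtain x z where p: "p = (x, z)"
    by fastforce
  have xz: "\<bar>x\<bar> \<le> norm p" "cmod z \<le> norm p"
    using norm_fst_le[of x z] norm_snd_le[of z x] by (simp_all add: p)
  have "norm (rem_lin \<epsilon> s p) \<le> \<theta> s * \<bar>Re z\<bar> + (cmod (damping \<epsilon> s) * cmod z + \<theta> s * \<bar>x\<bar>)"
    unfolding rem_lin_def p using norm_Pair_le \<theta>_nonneg[of s]
    by (smt (verit, ccfv_SIG) abs_mult fst_conv snd_conv norm_mult norm_of_real norm_triangle_ineq real_norm_def)
  also have "\<dots> \<le> \<theta> s * norm p + (2 * es g s * (1 + \<gamma> s) / \<epsilon> * norm p + \<theta> s * norm p)"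
    using xz abs_Re_le_cmod[of z] \<theta>_nonneg[of s] norm_damping_le[OF assms, of s]
      es_pos[of s] gamma_nonneg[of s] assms
    by (intro add_mono mult_left_mono mult_mono) auto
  finally show ?thesis
    by (simp add: algebra_simps)
qed

lemma inner_rem_lin_nonpos:
  assumes "0 < \<epsilon>"
  shows "inner p (rem_lin \<epsilon> s p) \<le> 0"
proof -
  have "inner p (rem_lin \<epsilon> s p) = Re (damping \<epsilon> s) * ((Re (snd p))\<^sup>2 + (Im (snd p))\<^sup>2)"
    by (cases p) (simp add: rem_lin_def inner_complex_def algebra_simps power2_eq_square)
  also have "\<dots> \<le> 0"
    using Re_damping_nonpos[OF assms] by (simp add: mult_nonpos_nonneg)
  finally show ?thesis .
qed

lemma rem_sol_ode:
  assumes "0 < \<epsilon>"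
  shows "rem_ode \<sigma> \<epsilon> s' (rem_sol \<sigma> \<epsilon> s')"
proof -
  define f where "f s = rem_forcing \<sigma> \<epsilon> s' s" for s
  define M where "M s = 2 * \<theta> s + 2 * es g s * (1 + \<gamma> s) / \<epsilon> + cmod (f s)" for s
  have f_cont: "continuous_on {s'..} f"
    unfolding f_def rem_forcing_def using assms
    by (intro continuous_intros \<alpha>_cont continuous_on_subset[OF \<theta>_cont] continuous_on_subset[OF z1'_cont]) auto
  interpret lipschitz_ode_on_ray "\<lambda>s p. rem_lin \<epsilon> s p + (0, f s)" M s'
  proof
    show "continuous_on {s'..} (\<lambda>s. rem_lin \<epsilon> s (u s) + (0, f s))" if "continuous_on {s'..} u" for u
      unfolding rem_lin_def damping_def using assms that
      by (intro continuous_intros f_cont continuous_on_subset[OF \<theta>_cont] continuous_on_subset[OF es_cont]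
          continuous_on_subset[OF gamma_cont] subset_UNIV) auto
    show "norm (rem_lin \<epsilon> s x + (0, f s) - (rem_lin \<epsilon> s y + (0, f s))) \<le> M s * norm (x - y)" for s x y
    proof -
      have "norm (rem_lin \<epsilon> s x + (0, f s) - (rem_lin \<epsilon> s y + (0, f s))) = norm (rem_lin \<epsilon> s (x - y))"
        by (simp add: rem_lin_diff[symmetric])
      also have "\<dots> \<le> (2 * \<theta> s + 2 * es g s * (1 + \<gamma> s) / \<epsilon>) * norm (x - y)"
        by (rule norm_rem_lin_le[OF assms])
      also have "\<dots> \<le> M s * norm (x - y)"
        by (intro mult_right_mono) (simp_all add: M_def)
      finally show ?thesis .
    qed
    show "norm (rem_lin \<epsilon> s 0 + (0, f s)) \<le> M s" if "s' \<le> s" for s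
      using \<theta>_nonneg[of s] es_pos[of s] gamma_nonneg[of s] assms
      by (simp add: rem_lin_def M_def)
    show "continuous_on {s'..} M"
      unfolding M_def using assms
      by (intro continuous_intros f_cont continuous_on_subset[OF \<theta>_cont] continuous_on_subset[OF es_cont]
          continuous_on_subset[OF gamma_cont] subset_UNIV) auto
  qed
  from solution_exists[of "(0, q \<sigma> s' s')"]
  have "\<exists>p. rem_ode \<sigma> \<epsilon> s' p"
    by (simp add: rem_ode_def f_def)
  then show ?thesis
    unfolding rem_sol_def by (rule someI_ex)
qed

definition remainder :: "real \<Rightarrow> real \<Rightarrow> real \<Rightarrow> real \<Rightarrow> cmat" where
  "remainder \<sigma> \<epsilon> s s' = frame s (fst (rem_sol \<sigma> \<epsilon> s' s)) (snd (rem_sol \<sigma> \<epsilon> s' s))"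

lemma expansion_eq_frame:
  "Ps g \<sigma> s + \<epsilon> *\<^sub>R a_coef \<gamma> g \<sigma> s s' + \<epsilon>\<^sup>2 *\<^sub>R remainder \<sigma> \<epsilon> s s'
   = (1/2) *\<^sub>R mat 1 + frame s (\<sigma> / 2 + \<epsilon> * \<alpha> \<sigma> s' s + \<epsilon>\<^sup>2 * fst (rem_sol \<sigma> \<epsilon> s' s))
       (of_real \<epsilon> * z1 \<sigma> s + of_real (\<epsilon>\<^sup>2) * snd (rem_sol \<sigma> \<epsilon> s' s))"
  by (simp add: Ps_eq a_coef_eq_frame remainder_def scaleR_frame frame_add add.assoc)

lemma expansion_solves:
  assumes "0 < \<epsilon>" and "s' \<le> s"
  shows "\<exists>D. ((\<lambda>t. Ps g \<sigma> t + \<epsilon> *\<^sub>R a_coef \<gamma> g \<sigma> t s' + \<epsilon>\<^sup>2 *\<^sub>R remainder \<sigma> \<epsilon> t s')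
      has_vector_derivative D) (at s within {s'..})
    \<and> \<epsilon> *\<^sub>R D = Ls \<gamma> g s (Ps g \<sigma> s + \<epsilon> *\<^sub>R a_coef \<gamma> g \<sigma> s s' + \<epsilon>\<^sup>2 *\<^sub>R remainder \<sigma> \<epsilon> s s')"
proof -
  define p where "p = rem_sol \<sigma> \<epsilon> s'"
  define P where "P = rem_lin \<epsilon> s (p s) + (0, rem_forcing \<sigma> \<epsilon> s' s)"
  have p_deriv: "(p has_vector_derivative P) (at s within {s'..})"
    using rem_sol_ode[OF assms(1), of \<sigma> s'] assms(2) by (simp add: rem_ode_def p_def P_def)
  define A where "A t = \<sigma> / 2 + \<epsilon> * \<alpha> \<sigma> s' t + \<epsilon>\<^sup>2 * fst (p t)" for t
  define Z where "Z t = of_real \<epsilon> * z1 \<sigma> t + of_real (\<epsilon>\<^sup>2) * snd (p t)" for t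
  define A' where "A' = \<epsilon> * - (\<theta> s * Re (z1 \<sigma> s)) + \<epsilon>\<^sup>2 * fst P"
  define Z' where "Z' = of_real \<epsilon> * z1' \<sigma> s + of_real (\<epsilon>\<^sup>2) * snd P"
  have "((\<lambda>t. fst (p t)) has_real_derivative fst P) (at s within {s'..})"
    using bounded_linear.has_vector_derivative[OF bounded_linear_fst p_deriv]
    by (simp add: has_real_derivative_iff_has_vector_derivative)
  then have "(A has_real_derivative A') (at s within {s'..})"
    unfolding A_def[abs_def] A'_def
    by (auto intro!: derivative_eq_intros \<alpha>_has_real_derivative assms(2))
  moreover have "(Z has_vector_derivative Z') (at s within {s'..})"
    unfolding Z_def[abs_def] Z'_def
    by (intro derivative_intros z1_has_vector_derivative bounded_linear.has_vector_derivative[OF bounded_linear_snd p_deriv])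
  ultimately have deriv: "((\<lambda>t. (1/2) *\<^sub>R mat 1 + frame t (A t) (Z t)) has_vector_derivative
      frame s (A' + \<theta> s * Re (Z s)) (Z' - of_real (\<theta> s * A s))) (at s within {s'..})"
    by (auto intro!: derivative_eq_intros frame_has_vector_derivative)
  have "A' + \<theta> s * Re (Z s) = 0"
    by (simp add: A'_def Z_def P_def rem_lin_def p_def algebra_simps)
  moreover have "of_real \<epsilon> * (Z' - of_real (\<theta> s * A s)) = of_real (2 * es g s) * (\<i> - of_real (\<gamma> s)) * Z s"
    using z1_balance[of s \<sigma>] assms(1)
    by (simp add: A_def Z_def Z'_def P_def rem_lin_def rem_forcing_def damping_def field_simps power2_eq_square)
      algebra
  ultimately have "\<epsilon> *\<^sub>R frame s (A' + \<theta> s * Re (Z s)) (Z' - of_real (\<theta> s * A s)) = Ls \<gamma> g s ((1/2) *\<^sub>R mat 1 + frame s (A s) (Z s))"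
    by (simp add: scaleR_frame Ls_frame)
  with deriv show ?thesis
    unfolding expansion_eq_frame A_def Z_def p_def by blast
qed

lemma q_cancels_forcing: "0 < \<epsilon> \<Longrightarrow> damping \<epsilon> s * q \<sigma> s' s + rem_forcing \<sigma> \<epsilon> s' s = 0"
  using q_balance[of s \<sigma> s']
  by (simp add: damping_def rem_forcing_def field_simps) algebra

lemma rem_sol_near_q:
  assumes "0 < \<epsilon>" and "s' \<le> s"
  shows "norm (rem_sol \<sigma> \<epsilon> s' s - (0, q \<sigma> s' s))
    \<le> 1 + integral {s'..s} (\<lambda>t. \<theta> t * cmod (q \<sigma> s' t) + cmod (q' \<sigma> s' t))"
proof -
  define p where "p = rem_sol \<sigma> \<epsilon> s'"
  define u where "u t = p t - (0, q \<sigma> s' t)" for t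
  define u' where "u' t = rem_lin \<epsilon> t (u t) + (- (\<theta> t * Re (q \<sigma> s' t)), - q' \<sigma> s' t)" for t
  define h where "h t = \<theta> t * cmod (q \<sigma> s' t) + cmod (q' \<sigma> s' t)" for t
  have ode: "rem_ode \<sigma> \<epsilon> s' p"
    unfolding p_def by (rule rem_sol_ode[OF assms(1)])
  have "(u has_vector_derivative u' t) (at t within {s'..})" if t: "s' \<le> t" for t
  proof -
    have "rem_lin \<epsilon> t (p t) + (0, rem_forcing \<sigma> \<epsilon> s' t) - (0, q' \<sigma> s' t) = u' t"
      using q_cancels_forcing[OF assms(1), of t \<sigma> s']
      by (simp add: u'_def u_def rem_lin_def algebra_simps prod_eq_iff)
    moreover have "(p has_vector_derivative rem_lin \<epsilon> t (p t) + (0, rem_forcing \<sigma> \<epsilon> s' t)) (at t within {s'..})"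
      using ode t by (simp add: rem_ode_def)
    ultimately show ?thesis
      unfolding u_def[abs_def] using t by (auto intro!: derivative_eq_intros q_has_vector_derivative)
  qed
  moreover have "continuous_on {s'..} h"
    unfolding h_def by (intro continuous_intros continuous_on_subset[OF \<theta>_cont] q_cont q'_cont subset_UNIV)
  moreover have "inner (u t) (u' t) \<le> norm (u t) * h t" if "s' \<le> t" for t
  proof -
    have "inner (u t) (u' t) \<le> inner (u t) (- (\<theta> t * Re (q \<sigma> s' t)), - q' \<sigma> s' t)"
      using inner_rem_lin_nonpos[OF assms(1), of "u t" t] by (simp add: u'_def inner_add_right)
    also have "\<dots> \<le> norm (u t) * norm (- (\<theta> t * Re (q \<sigma> s' t)), - q' \<sigma> s' t)"
      by (rule norm_cauchy_schwarz)
    also have "\<dots> \<le> norm (u t) * h t"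
    proof (rule mult_left_mono[OF _ norm_ge_zero])
      have "norm (- (\<theta> t * Re (q \<sigma> s' t)), - q' \<sigma> s' t) \<le> \<theta> t * \<bar>Re (q \<sigma> s' t)\<bar> + cmod (q' \<sigma> s' t)"
        using norm_Pair_le[of "- (\<theta> t * Re (q \<sigma> s' t))" "- q' \<sigma> s' t"] \<theta>_nonneg[of t] by (simp add: abs_mult)
      also have "\<dots> \<le> h t"
        unfolding h_def using mult_left_mono[OF abs_Re_le_cmod \<theta>_nonneg] by simp
      finally show "norm (- (\<theta> t * Re (q \<sigma> s' t)), - q' \<sigma> s' t) \<le> h t" .
    qed
    finally show ?thesis .
  qed
  ultimately have "sqrt (1 + (norm (u s))\<^sup>2) \<le> sqrt (1 + (norm (u s'))\<^sup>2) + integral {s'..s} h"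
    using \<theta>_nonneg assms(2) by (intro sqrt_one_plus_norm_sq_le) (auto simp: h_def)
  moreover have "u s' = 0"
    using ode by (simp add: u_def rem_ode_def)
  moreover have "norm (u s) \<le> sqrt (1 + (norm (u s))\<^sup>2)"
    by (simp add: real_le_rsqrt)
  ultimately show ?thesis
    by (simp add: u_def p_def h_def[abs_def])
qed

lemma damping_ratio_bounds: "0 \<le> \<gamma> s / (1 + (\<gamma> s)\<^sup>2) \<and> \<gamma> s / (1 + (\<gamma> s)\<^sup>2) \<le> 1 / 2"
proof -
  have "2 * \<gamma> s \<le> 1 + (\<gamma> s)\<^sup>2"
    using zero_le_power2[of "1 - \<gamma> s"] by (simp add: power2_diff)
  then show ?thesis
    using gamma_nonneg[of s] by (simp add: field_simps add_pos_nonneg)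
qed

lemma j_le: "j s \<le> 4 / g ^ 3 * (w s)\<^sup>2"
proof -
  have "j s = \<gamma> s / (1 + (\<gamma> s)\<^sup>2) * (w s ^ 3 * (w s)\<^sup>2)"
    by (simp add: j_eq flip: power_add)
  also have "\<dots> \<le> 1 / 2 * ((2 / g) ^ 3 * (w s)\<^sup>2)"
    using damping_ratio_bounds[of s] w_power_le[of s 3] w_pos[of s] g_pos by (intro mult_mono) auto
  finally show ?thesis
    by (simp add: power_divide)
qed

lemma J_bounds: "s' \<le> s \<Longrightarrow> 0 \<le> J s' s \<and> J s' s \<le> 16 * pi / g ^ 4"
proof
  assume s: "s' \<le> s"
  have j_cont': "continuous_on {s'..s} j"
    by (rule continuous_on_subset[OF j_cont]) auto
  show "0 \<le> J s' s"
    unfolding J_def using gamma_nonneg es_pos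
    by (intro integral_nonneg integrable_continuous_real j_cont') (simp add: j_def less_imp_le)
  have "J s' s \<le> 4 / g ^ 3 * (4 * pi / g)"
    unfolding J_def using g_pos by (intro integral_le_w_sq s j_cont' j_le) auto
  then show "J s' s \<le> 16 * pi / g ^ 4"
    by (simp add: power_eq_if)
qed

text \<open>Factoring \<open>w\<^sup>2\<close> out of \<open>q\<close> and \<open>q'\<close> leaves polynomials in quantities that range over a compact
  set as long as \<open>\<gamma>'\<close> and \<open>\<gamma>''\<close> are bounded.\<close>
definition q_args :: "real \<Rightarrow> real \<Rightarrow> complex \<times> real \<times> real \<times> real \<times> real \<times> real \<times> real" where
  "q_args s' s = (\<kappa> s, \<gamma>' s, \<gamma>'' s, s * w s, w s, J s' s, \<gamma> s / (1 + (\<gamma> s)\<^sup>2))"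

definition q_poly :: "real \<Rightarrow> complex \<times> real \<times> real \<times> real \<times> real \<times> real \<times> real \<Rightarrow> complex" where
  "q_poly \<sigma> = (\<lambda>(k, d1, d2, x, v, I, r). of_real (\<sigma> * g / 32) *
     (of_real (d1 * v\<^sup>2) * k ^ 3 + of_real (3/4 * x * v ^ 3) * k\<^sup>2 - of_real (g\<^sup>2/16 * v * I) * k))"

definition q'_poly :: "real \<Rightarrow> complex \<times> real \<times> real \<times> real \<times> real \<times> real \<times> real \<Rightarrow> complex" where
  "q'_poly \<sigma> = (\<lambda>(k, d1, d2, x, v, I, r). of_real (\<sigma> * g / 32) *
     (of_real (d2 * v\<^sup>2) * k ^ 3 - of_real (3 * d1\<^sup>2 * v\<^sup>2) * k ^ 4 - of_real (5/2 * x * d1 * v ^ 3) * k ^ 3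
      + of_real (3/4 * v ^ 4) * k\<^sup>2 - of_real (9/8 * x\<^sup>2 * v ^ 4) * k\<^sup>2 + of_real (g\<^sup>2/16 * d1 * v * I) * k\<^sup>2
      + of_real (3 * g\<^sup>2/64 * x * v\<^sup>2 * I) * k - of_real (g\<^sup>2/16 * v ^ 6 * r) * k))"

lemma q_eq_poly: "q \<sigma> s' s = of_real ((w s)\<^sup>2) * q_poly \<sigma> (q_args s' s)"
  by (simp add: q_def q_poly_def q_args_def algebra_simps eval_nat_numeral)

lemma q'_eq_poly: "q' \<sigma> s' s = of_real ((w s)\<^sup>2) * q'_poly \<sigma> (q_args s' s)"
  by (simp add: q'_def q'_poly_def q_args_def j_eq algebra_simps eval_nat_numeral)

lemma q_bounds:
  "\<exists>C\<ge>0. \<forall>s' s. s' \<le> s \<longrightarrow> \<bar>\<gamma>' s\<bar> \<le> B \<longrightarrow> \<bar>\<gamma>'' s\<bar> \<le> B \<longrightarrow>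
     cmod (q \<sigma> s' s) \<le> C * (w s)\<^sup>2 \<and> cmod (q' \<sigma> s' s) \<le> C * (w s)\<^sup>2"
proof -
  define K where "K = cball (0::complex) 1 \<times> {-B..B} \<times> {-B..B} \<times> {-2..2::real} \<times> {0..2/g}
    \<times> {0..16 * pi / g ^ 4} \<times> {0..1/2::real}"
  have "compact K"
    unfolding K_def by (intro compact_Times compact_cball compact_Icc)
  moreover have "continuous_on K (q_poly \<sigma>)" "continuous_on K (q'_poly \<sigma>)"
    unfolding q_poly_def q'_poly_def case_prod_beta' by (intro continuous_intros)+
  ultimately obtain C1 C2 where C1: "\<forall>x\<in>K. cmod (q_poly \<sigma> x) \<le> C1" and C2: "\<forall>x\<in>K. cmod (q'_poly \<sigma> x) \<le> C2"
    by (metis bounded_iff compact_continuous_image compact_imp_bounded image_eqI)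
  show ?thesis
  proof (intro exI[of _ "max (max C1 C2) 0"] conjI allI impI)
    fix s' s assume "s' \<le> s" and "\<bar>\<gamma>' s\<bar> \<le> B" and "\<bar>\<gamma>'' s\<bar> \<le> B"
    then have "q_args s' s \<in> K"
      using norm_\<kappa>_le[of s] abs_mult_w_le[of s] w_pos[of s] w_le[of s] J_bounds damping_ratio_bounds[of s]
      by (auto simp: K_def q_args_def abs_le_iff)
    then have "cmod (q_poly \<sigma> (q_args s' s)) \<le> max (max C1 C2) 0" "cmod (q'_poly \<sigma> (q_args s' s)) \<le> max (max C1 C2) 0"
      using C1 C2 by (meson max.coboundedI1 max.coboundedI2 order_trans)+
    then show "cmod (q \<sigma> s' s) \<le> max (max C1 C2) 0 * (w s)\<^sup>2" "cmod (q' \<sigma> s' s) \<le> max (max C1 C2) 0 * (w s)\<^sup>2"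
      unfolding q_eq_poly q'_eq_poly norm_mult norm_of_real
      by (simp_all add: mult_right_mono mult.commute[of "(w s)\<^sup>2"])
  qed simp
qed

lemma remainder_bounded:
  "\<exists>C. \<forall>\<epsilon>>0. \<forall>s s'. s' \<le> s \<longrightarrow> (\<forall>\<tau>\<in>{s'..s}. \<bar>\<gamma>' \<tau>\<bar> \<le> B \<and> \<bar>\<gamma>'' \<tau>\<bar> \<le> B) \<longrightarrow>
     norm (remainder \<sigma> \<epsilon> s s') \<le> C"
proof -
  obtain Cq where Cq_nonneg: "0 \<le> Cq" and Cq: "\<And>s' s. s' \<le> s \<Longrightarrow> \<bar>\<gamma>' s\<bar> \<le> B \<Longrightarrow> \<bar>\<gamma>'' s\<bar> \<le> B \<Longrightarrow>
      cmod (q \<sigma> s' s) \<le> Cq * (w s)\<^sup>2 \<and> cmod (q' \<sigma> s' s) \<le> Cq * (w s)\<^sup>2"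
    using q_bounds[of B \<sigma>] by blast
  define Ch where "Ch = (g / 4 * (2 / g)\<^sup>2 + 1) * Cq"
  show ?thesis
  proof (intro exI[of _ "sqrt 2 * (1 + Ch * (4 * pi / g) + Cq * (2 / g)\<^sup>2)"] allI impI)
    fix \<epsilon> s s' :: real
    assume \<epsilon>: "0 < \<epsilon>" and s: "s' \<le> s" and B: "\<forall>\<tau>\<in>{s'..s}. \<bar>\<gamma>' \<tau>\<bar> \<le> B \<and> \<bar>\<gamma>'' \<tau>\<bar> \<le> B"
    define p where "p = rem_sol \<sigma> \<epsilon> s' s"
    have h_le: "\<theta> \<tau> * cmod (q \<sigma> s' \<tau>) + cmod (q' \<sigma> s' \<tau>) \<le> Ch * (w \<tau>)\<^sup>2" if \<tau>: "\<tau> \<in> {s'..s}" for \<tau>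
    proof -
      have q: "cmod (q \<sigma> s' \<tau>) \<le> Cq * (w \<tau>)\<^sup>2" "cmod (q' \<sigma> s' \<tau>) \<le> Cq * (w \<tau>)\<^sup>2"
        using Cq[of s' \<tau>] B \<tau> by auto
      have "\<theta> \<tau> * cmod (q \<sigma> s' \<tau>) \<le> (g / 4 * (2 / g)\<^sup>2) * (Cq * (w \<tau>)\<^sup>2)"
        unfolding \<theta>_eq using q(1) w_power_le[of \<tau> 2] g_pos Cq_nonneg
        by (intro mult_mono) auto
      with q(2) show ?thesis
        by (simp add: Ch_def algebra_simps)
    qed
    have "norm (p - (0, q \<sigma> s' s)) \<le> 1 + integral {s'..s} (\<lambda>\<tau>. \<theta> \<tau> * cmod (q \<sigma> s' \<tau>) + cmod (q' \<sigma> s' \<tau>))"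
      unfolding p_def by (rule rem_sol_near_q[OF \<epsilon> s])
    also have "\<dots> \<le> 1 + Ch * (4 * pi / g)"
      using s h_le g_pos Cq_nonneg
      by (intro add_left_mono integral_le_w_sq continuous_intros continuous_on_subset[OF \<theta>_cont]
          continuous_on_subset[OF q_cont] continuous_on_subset[OF q'_cont]) (auto simp: Ch_def)
    finally have "norm p \<le> 1 + Ch * (4 * pi / g) + cmod (q \<sigma> s' s)"
      using norm_triangle_ineq[of "p - (0, q \<sigma> s' s)" "(0, q \<sigma> s' s)"] by simp
    also have "cmod (q \<sigma> s' s) \<le> Cq * (2 / g)\<^sup>2"
      using Cq[of s' s] B s mult_left_mono[OF w_power_le[of s 2] Cq_nonneg] by auto
    finally show "norm (remainder \<sigma> \<epsilon> s s') \<le> sqrt 2 * (1 + Ch * (4 * pi / g) + Cq * (2 / g)\<^sup>2)"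
      by (simp add: remainder_def norm_frame p_def)
  qed
qed

lemma remainder_bounded_on_bounded_sets:
  "\<exists>C. \<forall>\<epsilon>>0. \<forall>s s'. \<bar>s\<bar> \<le> K \<and> \<bar>s'\<bar> \<le> K \<and> s' \<le> s \<longrightarrow> norm (remainder \<sigma> \<epsilon> s s') \<le> C"
proof -
  have "bounded (\<gamma>' ` {-K..K})" "bounded (\<gamma>'' ` {-K..K})"
    by (intro compact_imp_bounded compact_continuous_image continuous_on_subset[OF gamma'_cont]
        continuous_on_subset[OF gamma''_cont] compact_Icc subset_UNIV)+
  then obtain B1 B2 where B1: "\<And>\<tau>. \<tau> \<in> {-K..K} \<Longrightarrow> \<bar>\<gamma>' \<tau>\<bar> \<le> B1" and B2: "\<And>\<tau>. \<tau> \<in> {-K..K} \<Longrightarrow> \<bar>\<gamma>'' \<tau>\<bar> \<le> B2"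
    unfolding bounded_iff by (metis image_eqI real_norm_def)
  obtain C where C: "\<forall>\<epsilon>>0. \<forall>s s'. s' \<le> s \<longrightarrow> (\<forall>\<tau>\<in>{s'..s}. \<bar>\<gamma>' \<tau>\<bar> \<le> max B1 B2 \<and> \<bar>\<gamma>'' \<tau>\<bar> \<le> max B1 B2) \<longrightarrow>
      norm (remainder \<sigma> \<epsilon> s s') \<le> C"
    using remainder_bounded by blast
  show ?thesis
  proof (intro exI[of _ C] allI impI)
    fix \<epsilon> s s' :: real assume "0 < \<epsilon>" and K: "\<bar>s\<bar> \<le> K \<and> \<bar>s'\<bar> \<le> K \<and> s' \<le> s"
    moreover have "\<forall>\<tau>\<in>{s'..s}. \<bar>\<gamma>' \<tau>\<bar> \<le> max B1 B2 \<and> \<bar>\<gamma>'' \<tau>\<bar> \<le> max B1 B2"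
    proof
      fix \<tau> assume "\<tau> \<in> {s'..s}"
      then have "\<tau> \<in> {-K..K}"
        using K by auto
      then show "\<bar>\<gamma>' \<tau>\<bar> \<le> max B1 B2 \<and> \<bar>\<gamma>'' \<tau>\<bar> \<le> max B1 B2"
        using B1 B2 by (simp add: le_max_iff_disj)
    qed
    ultimately show "norm (remainder \<sigma> \<epsilon> s s') \<le> C"
      using C by blast
  qed
qed

lemma remainder_bounded_uniformly:
  assumes "bounded (range \<gamma>')" and "bounded (range \<gamma>'')"
  shows "\<exists>C. \<forall>\<epsilon>>0. \<forall>s s'. s' \<le> s \<longrightarrow> norm (remainder \<sigma> \<epsilon> s s') \<le> C"
proof -
  obtain B1 B2 where "\<And>\<tau>. \<bar>\<gamma>' \<tau>\<bar> \<le> B1" and "\<And>\<tau>. \<bar>\<gamma>'' \<tau>\<bar> \<le> B2"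
    using assms unfolding bounded_iff by auto
  then have "\<forall>\<tau>. \<bar>\<gamma>' \<tau>\<bar> \<le> max B1 B2 \<and> \<bar>\<gamma>'' \<tau>\<bar> \<le> max B1 B2"
    by (simp add: le_max_iff_disj)
  then show ?thesis
    using remainder_bounded[of "max B1 B2" \<sigma>] by blast
qed

end

theorem lemma3p2:
  fixes g :: real and \<gamma> :: "real \<Rightarrow> real"
  assumes g_pos: "g > 0"
    and gamma_nonneg: "\<And>s. \<gamma> s \<ge> 0"
    and gamma_smooth: "smooth_fun \<gamma>"
  shows "\<forall>\<sigma>\<in>{1, -1::real}. \<exists>r :: real \<Rightarrow> real \<Rightarrow> real \<Rightarrow> cmat.
     (\<forall>\<epsilon>>0. \<forall>s'. \<forall>s\<ge>s'. \<exists>D.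
        ((\<lambda>t. Ps g \<sigma> t + \<epsilon> *\<^sub>R a_coef \<gamma> g \<sigma> t s' + \<epsilon>\<^sup>2 *\<^sub>R r \<epsilon> t s')
           has_vector_derivative D) (at s within {s'..})
        \<and> \<epsilon> *\<^sub>R D = Ls \<gamma> g s (Ps g \<sigma> s + \<epsilon> *\<^sub>R a_coef \<gamma> g \<sigma> s s' + \<epsilon>\<^sup>2 *\<^sub>R r \<epsilon> s s'))
   \<and> (\<forall>K. \<exists>C. \<forall>\<epsilon>>0. \<forall>s s'. \<bar>s\<bar> \<le> K \<and> \<bar>s'\<bar> \<le> K \<and> s' \<le> s \<longrightarrow> norm (r \<epsilon> s s') \<le> C)
   \<and> ((bounded (range \<gamma>) \<and> bounded (range (deriv \<gamma>)) \<and> bounded (range (deriv (deriv \<gamma>)))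
        \<and> continuous_on UNIV \<gamma> \<and> continuous_on UNIV (deriv \<gamma>) \<and> continuous_on UNIV (deriv (deriv \<gamma>)))
       \<longrightarrow> (\<exists>C. \<forall>\<epsilon>>0. \<forall>s s'. s' \<le> s \<longrightarrow> norm (r \<epsilon> s s') \<le> C))"
proof -
  have smooth: "((deriv ^^ n) \<gamma>) differentiable (at s)" for n s
    using gamma_smooth unfolding smooth_fun_def by blast
  interpret landau_zener_dephasing g \<gamma> "deriv \<gamma>" "deriv (deriv \<gamma>)"
  proof
    show "(\<gamma> has_real_derivative deriv \<gamma> s) (at s)" "(deriv \<gamma> has_real_derivative deriv (deriv \<gamma>) s) (at s)" for s
      using smooth[of 0 s] smooth[of 1 s] by (simp_all add: DERIV_deriv_iff_real_differentiable)
    show "continuous_on UNIV (deriv (deriv \<gamma>))"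
      using smooth[of 2] by (auto intro!: continuous_at_imp_continuous_on differentiable_imp_continuous_within
          simp: numeral_2_eq_2)
  qed (use g_pos gamma_nonneg in auto)
  show ?thesis
    apply (intro ballI)
    subgoal for \<sigma>
      using expansion_solves remainder_bounded_on_bounded_sets remainder_bounded_uniformly
      by (intro exI[of _ "remainder \<sigma>"]) blast
    done
qed

end
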